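(* Let $(g,f)$ be a Riordan matrix with $A$-sequence $(a_j)_{j\ge0}$, $A(t)=\sum_{j\ge0}a_jt^j$. Let $c_j=[t^j]\,1/A(t)$ for $j\ge0$, and put $\tilde c_0=\tilde c_1=0$ and $\tilde c_j=c_{j-2}$ for $j\ge2$. Then a sequence $(b_j)_{j\ge0}$ is a type-I $B$-sequence of $(g,f)$ if and only if $a_0=1$, $a_2=0$, for every $\ell\ge0$ $$b_\ell=a_{2\ell+1}-\sum_{\mathbf i=(i_1,\dots,i_k)\in\mathcal D_{2\ell,\ell-1}} b_k\,\tilde c_{i_1}\tilde c_{i_2}\cdots\tilde c_{i_k},$$ and for every $\ell\ge2$ $$a_{2\ell}=\sum_{\mathbf i=(i_1,\dots,i_k)\in\mathcal D_{2\ell-1,\ell-1}} b_k\,\tilde c_{i_1}\tilde c_{i_2}\cdots\tilde c_{i_k}.$$ (The right-hand side of the formula for $b_\ell$ involves only $b_k$ with $k\le\ell-1$, so the $b_\ell$ are determined recursively from the $a_j$, with $a_{2\ell+1}$ arbitrary; e.g. $b_0=a_1$, $b_1=a_3$, $a_4=-a_1a_3$, $b_2=a_5-b_1(a_1^2-a_2)$.)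
   Context: Let $K$ be $\mathbb{R}$ or $\mathbb{C}$. A (proper) Riordan matrix is a pair $(g,f)$ of formal power series in $K[[t]]$ with $g(0)=1$, $f(0)=0$, $f'(0)\neq 0$, identified with the infinite lower triangular matrix $(d_{n,k})_{n,k\ge0}$, $d_{n,k}=[t^n]g(t)f(t)^k$; we set $d_{n,k}=0$ if $n<0$, $k<0$ or $k>n$. The $A$-sequence $(a_j)_{j\ge0}$ is the unique sequence whose generating function $A(t)$ satisfies $f(t)=tA(f(t))$ (so $a_0\neq0$). A type-I $B$-sequence of $(g,f)$ is a sequence $(b_j)_{j\ge0}$ such that $d_{n+1,k}=d_{n,k-1}+\sum_{j\ge0}b_j d_{n-j,k+j}$ for all $n\ge0$ and $k\ge1$. For integers $n\ge1$ and $m\ge1$, $\mathcal D_{n,m}$ denotes the set of compositions of $n$ into at most $m$ parts, i.e. tuples $(i_1,\dots,i_k)$ of positive integers with $1\le k\le m$ and $i_1+\cdots+i_k=n$; $k$ is the length of the tuple. By convention $\mathcal D_{0,-1}=\mathcal D_{2,0}=\emptyset$ (empty sums are $0$). *)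

theory Defs
  imports "HOL-Computational_Algebra.Formal_Power_Series"
begin

definition riordan :: "'a::field fps \<Rightarrow> 'a fps \<Rightarrow> bool" where
  "riordan g f \<longleftrightarrow> fps_nth g 0 = 1 \<and> fps_nth f 0 = 0 \<and> fps_nth f 1 \<noteq> 0"

definition riordan_entry :: "'a::field fps \<Rightarrow> 'a fps \<Rightarrow> int \<Rightarrow> int \<Rightarrow> 'a" where
  "riordan_entry g f n k =
     (if n < 0 \<or> k < 0 \<or> k > n then 0 else fps_nth (g * f ^ nat k) (nat n))"

definition is_A_series :: "'a::field fps \<Rightarrow> 'a fps \<Rightarrow> bool" where
  "is_A_series f A \<longleftrightarrow> f = fps_X * fps_compose A f"

definition is_typeI_B_seq :: "'a::field fps \<Rightarrow> 'a fps \<Rightarrow> (nat \<Rightarrow> 'a) \<Rightarrow> bool" where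
  "is_typeI_B_seq g f b \<longleftrightarrow>
     (\<forall>n::nat. \<forall>k::nat. k \<ge> 1 \<longrightarrow>
        riordan_entry g f (int n + 1) (int k) =
          riordan_entry g f (int n) (int k - 1)
          + (\<Sum>j\<le>n. b j * riordan_entry g f (int n - int j) (int k + int j)))"

definition compositions :: "nat \<Rightarrow> int \<Rightarrow> nat list set" where
  "compositions n m = {is. 1 \<le> length is \<and> int (length is) \<le> m \<and>
                          (\<forall>i\<in>set is. 0 < i) \<and> sum_list is = n}"

end

theory Submission
  imports Defs
begin

text \<open>
  Write B(t) = sum_j b_j t^j. For a column k >= 1 the type-I recurrence says
  g f^k = t g f^(k-1) + t g f^k B(t f); cancelling g f^(k-1), all of them together amount to the
  single identity f = t (1 + f B(t f)). Since f = t A(f), we have t f = D(f) for D = t^2 / A, so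
  the identity reads A(f) = (1 + t B(D))(f), and as composition with f is injective it is
  equivalent to A = 1 + t B(D). The theorem is this equation read coefficientwise:
  [t^n] D^k vanishes for n < 2k, equals 1 for n = 2k, and in general is the sum over the
  compositions of n into k parts of the products of the coefficients [t^i] D, which are the
  shifted coefficients of 1/A in the statement.
\<close>

unbundle fps_syntax

definition compositions_of_length :: "nat \<Rightarrow> nat \<Rightarrow> nat list set" where
  "compositions_of_length n k = {is. length is = k \<and> (\<forall>i\<in>set is. 0 < i) \<and> sum_list is = n}"

lemma finite_compositions_of_length: "finite (compositions_of_length n k)"
proof (rule finite_subset)
  show "compositions_of_length n k \<subseteq> {xs. set xs \<subseteq> {0..n} \<and> length xs = k}"
    unfolding compositions_of_length_def by (auto simp: member_le_sum_list)
qed (simp add: finite_lists_length_eq)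

lemma compositions_of_length_0: "compositions_of_length n 0 = (if n = 0 then {[]} else {})"
  by (auto simp: compositions_of_length_def)

lemma compositions_of_length_Suc:
  "compositions_of_length n (Suc k) =
     (\<lambda>(i, is). i # is) ` (SIGMA i:{1..n}. compositions_of_length (n - i) k)"
proof (intro equalityI subsetI)
  fix xs assume xs: "xs \<in> compositions_of_length n (Suc k)"
  then obtain i js where "xs = i # js"
    unfolding compositions_of_length_def by (cases xs) auto
  with xs show "xs \<in> (\<lambda>(i, is). i # is) ` (SIGMA i:{1..n}. compositions_of_length (n - i) k)"
    by (auto simp: compositions_of_length_def image_iff)
qed (auto simp: compositions_of_length_def)

lemma fps_power_nth_compositions:
  fixes P :: "'a::comm_ring_1 fps"
  assumes "P $ 0 = 0"
  shows "(P ^ k) $ n = (\<Sum>is\<in>compositions_of_length n k. prod_list (map (($) P) is))"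
proof (induction k arbitrary: n)
  case 0
  then show ?case by (simp add: compositions_of_length_0)
next
  case (Suc k)
  have "(P ^ Suc k) $ n = (\<Sum>i=0..n. P $ i * (P ^ k) $ (n - i))"
    by (simp add: fps_mult_nth)
  also have "\<dots> = (\<Sum>i=1..n. P $ i * (P ^ k) $ (n - i))"
    using assms by (cases n) (simp_all add: sum.atLeast_Suc_atMost)
  also have "\<dots> = (\<Sum>i=1..n. \<Sum>is\<in>compositions_of_length (n - i) k. prod_list (map (($) P) (i # is)))"
    by (simp add: Suc.IH sum_distrib_left)
  also have "\<dots> = (\<Sum>(i, is)\<in>(SIGMA i:{1..n}. compositions_of_length (n - i) k).
                     prod_list (map (($) P) (i # is)))"
    by (rule sum.Sigma) (auto simp: finite_compositions_of_length)
  also have "\<dots> = (\<Sum>is\<in>compositions_of_length n (Suc k). prod_list (map (($) P) is))"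
    unfolding compositions_of_length_Suc
    by (subst sum.reindex) (auto simp: inj_on_def intro!: sum.cong)
  finally show ?case .
qed

lemma compositions_eq_UN_compositions_of_length:
  "compositions n m = (\<Union>k\<in>{1..nat m}. compositions_of_length n k)"
  unfolding compositions_def compositions_of_length_def by (auto simp: le_nat_iff)

lemma sum_compositions_eq_sum_fps_power_nth:
  fixes P :: "'a::comm_ring_1 fps"
  assumes "P $ 0 = 0"
  shows "(\<Sum>is\<in>compositions n m. b (length is) * prod_list (map (($) P) is))
       = (\<Sum>k=1..nat m. b k * (P ^ k) $ n)"
proof -
  have "(\<Sum>is\<in>compositions n m. b (length is) * prod_list (map (($) P) is))
      = (\<Sum>k=1..nat m. \<Sum>is\<in>compositions_of_length n k. b (length is) * prod_list (map (($) P) is))"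
    unfolding compositions_eq_UN_compositions_of_length
    by (rule sum.UNION_disjoint)
      (auto simp: finite_compositions_of_length, auto simp: compositions_of_length_def)
  also have "\<dots> = (\<Sum>k=1..nat m. b k * (P ^ k) $ n)"
    by (rule sum.cong) (auto simp: fps_power_nth_compositions[OF assms] sum_distrib_left
        compositions_of_length_def)
  finally show ?thesis .
qed

lemma riordan_entry_eq_nth:
  assumes "f $ 0 = 0"
  shows "riordan_entry g f (int n) (int k) = (g * f ^ k) $ n"
proof (cases "n < k")
  case True
  have "(g * f ^ k) $ n = (\<Sum>i=0..n. g $ i * (f ^ k) $ (n - i))"
    by (simp add: fps_mult_nth)
  also have "\<dots> = 0"
    using startsby_zero_power_prefix[OF assms, of k] True by (intro sum.neutral) auto
  finally show ?thesis
    using True by (simp add: riordan_entry_def)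
qed (simp add: riordan_entry_def)

lemma fps_mult_nth_cong:
  fixes P Q R :: "'a::comm_ring_1 fps"
  assumes "\<And>m. m \<le> n \<Longrightarrow> Q $ m = R $ m"
  shows "(P * Q) $ n = (P * R) $ n"
  unfolding fps_mult_nth using assms by (intro sum.cong) auto

lemma fps_compose_nth_eq_partial_sum:
  fixes Q :: "'a::comm_ring_1 fps"
  assumes "Q $ 0 = 0" and "m \<le> n"
  shows "(Abs_fps b oo Q) $ m = (\<Sum>j\<le>n. fps_const (b j) * Q ^ j) $ m"
proof -
  have "(Abs_fps b oo Q) $ m = (\<Sum>j=0..m. b j * (Q ^ j) $ m)"
    by (simp add: fps_compose_nth)
  also have "\<dots> = (\<Sum>j\<le>n. b j * (Q ^ j) $ m)"
    using startsby_zero_power_prefix[OF assms(1)] assms(2)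
    by (intro sum.mono_neutral_left) auto
  also have "\<dots> = (\<Sum>j\<le>n. fps_const (b j) * Q ^ j) $ m"
    by (simp add: fps_sum_nth)
  finally show ?thesis .
qed

lemma fps_mult_compose_nth:
  fixes Q :: "'a::comm_ring_1 fps"
  assumes "Q $ 0 = 0"
  shows "(P * (Abs_fps b oo Q)) $ n = (\<Sum>j\<le>n. b j * (P * Q ^ j) $ n)"
proof -
  have "(P * (Abs_fps b oo Q)) $ n = (P * (\<Sum>j\<le>n. fps_const (b j) * Q ^ j)) $ n"
    using fps_compose_nth_eq_partial_sum[OF assms] by (intro fps_mult_nth_cong) auto
  also have "\<dots> = (\<Sum>j\<le>n. b j * (P * Q ^ j) $ n)"
    unfolding sum_distrib_left fps_sum_nth by (simp add: mult.left_commute[of P])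
  finally show ?thesis .
qed

lemma fps_eq_X_mult_iff:
  fixes P Q :: "'a::comm_ring_1 fps"
  shows "P = fps_X * Q \<longleftrightarrow> P $ 0 = 0 \<and> (\<forall>n. P $ Suc n = Q $ n)"
proof
  assume coeffs: "P $ 0 = 0 \<and> (\<forall>n. P $ Suc n = Q $ n)"
  show "P = fps_X * Q"
  proof (rule fps_ext)
    show "P $ n = (fps_X * Q) $ n" for n
      using coeffs by (cases n) simp_all
  qed
qed simp

lemma sum_riordan_entry_eq_nth_compose:
  fixes g f :: "'a::field fps"
  assumes f0: "f $ 0 = 0"
  shows "(\<Sum>j\<le>n. b j * riordan_entry g f (int n - int j) (int k + int j))
           = (g * f ^ k * (Abs_fps b oo (fps_X * f))) $ n"
proof -
  have "riordan_entry g f (int n - int j) (int k + int j) = (g * f ^ k * (fps_X * f) ^ j) $ n"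
    if "j \<le> n" for j
  proof -
    have "riordan_entry g f (int n - int j) (int k + int j) = (g * f ^ (k + j)) $ (n - j)"
      using riordan_entry_eq_nth[OF f0, of g "n - j" "k + j"] that by (simp add: of_nat_diff)
    also have "\<dots> = (fps_X ^ j * (g * f ^ (k + j))) $ n"
      using that by (simp add: fps_X_power_mult_nth)
    also have "fps_X ^ j * (g * f ^ (k + j)) = g * f ^ k * (fps_X * f) ^ j"
      by (simp add: power_add power_mult_distrib mult_ac)
    finally show ?thesis .
  qed
  then have "(\<Sum>j\<le>n. b j * riordan_entry g f (int n - int j) (int k + int j))
               = (\<Sum>j\<le>n. b j * (g * f ^ k * (fps_X * f) ^ j) $ n)"
    by (intro sum.cong) auto
  also have "\<dots> = (g * f ^ k * (Abs_fps b oo (fps_X * f))) $ n"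
    by (rule fps_mult_compose_nth[symmetric]) (simp add: f0)
  finally show ?thesis .
qed

lemma is_typeI_B_seq_iff_coeffs:
  fixes g f :: "'a::field fps" and b :: "nat \<Rightarrow> 'a"
  assumes f0: "f $ 0 = 0"
  defines "W \<equiv> Abs_fps b oo (fps_X * f)"
  shows "is_typeI_B_seq g f b \<longleftrightarrow>
           (\<forall>k n. (g * f ^ Suc k) $ Suc n = (g * f ^ k + g * f ^ Suc k * W) $ n)"
proof -
  have "is_typeI_B_seq g f b \<longleftrightarrow>
          (\<forall>k n. riordan_entry g f (int n + 1) (int (Suc k)) =
                   riordan_entry g f (int n) (int (Suc k) - 1)
                   + (\<Sum>j\<le>n. b j * riordan_entry g f (int n - int j) (int (Suc k) + int j)))"
  proof -
    have "(\<forall>n k::nat. 1 \<le> k \<longrightarrow> C n k) \<longleftrightarrow> (\<forall>k n. C n (Suc k))" for C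
      by (auto simp: Suc_le_eq gr0_conv_Suc)
    then show ?thesis
      unfolding is_typeI_B_seq_def .
  qed
  also have "\<dots> \<longleftrightarrow> (\<forall>k n. (g * f ^ Suc k) $ Suc n = (g * f ^ k + g * f ^ Suc k * W) $ n)"
  proof -
    have "riordan_entry g f (int n + 1) (int (Suc k)) = (g * f ^ Suc k) $ Suc n"
      and "riordan_entry g f (int n) (int (Suc k) - 1) = (g * f ^ k) $ n" for n k
      using riordan_entry_eq_nth[OF f0, of g "Suc n" "Suc k"] riordan_entry_eq_nth[OF f0, of g n k]
      by (simp_all add: add.commute)
    then show ?thesis
      unfolding W_def sum_riordan_entry_eq_nth_compose[OF f0] fps_add_nth by simp
  qed
  finally show ?thesis .
qed

lemma is_typeI_B_seq_iff:
  fixes g f :: "'a::field fps"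
  assumes "riordan g f"
  shows "is_typeI_B_seq g f b \<longleftrightarrow> f = fps_X * (1 + f * (Abs_fps b oo (fps_X * f)))"
proof -
  define W where "W = Abs_fps b oo (fps_X * f)"
  from assms have g0: "g $ 0 = 1" and f0: "f $ 0 = 0" and f1: "f $ 1 \<noteq> 0"
    by (auto simp: riordan_def)
  from g0 f1 have "g \<noteq> 0" "f \<noteq> 0"
    by auto
  have "is_typeI_B_seq g f b \<longleftrightarrow> (\<forall>k. g * f ^ Suc k = fps_X * (g * f ^ k + g * f ^ Suc k * W))"
    unfolding is_typeI_B_seq_iff_coeffs[OF f0] W_def fps_eq_X_mult_iff
    using f0 by (simp add: fps_mult_nth_0)
  also have "\<dots> \<longleftrightarrow> (\<forall>k. g * f ^ k * (f - fps_X * (1 + f * W)) = 0)"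
    by (simp add: algebra_simps)
  also have "\<dots> \<longleftrightarrow> f = fps_X * (1 + f * W)"
    using \<open>g \<noteq> 0\<close> \<open>f \<noteq> 0\<close> by simp
  finally show ?thesis
    unfolding W_def .
qed

lemma is_A_series_nth_0: "is_A_series f A \<Longrightarrow> A $ 0 = f $ 1"
  unfolding is_A_series_def by (erule ssubst) simp

lemma is_A_series_X2_inverse_compose:
  fixes f A :: "'a::field fps"
  assumes A: "is_A_series f A" and f0: "f $ 0 = 0" and f1: "f $ 1 \<noteq> 0"
  shows "(fps_X ^ 2 * inverse A) oo f = fps_X * f"
proof -
  have fA: "f = fps_X * (A oo f)"
    using A by (simp add: is_A_series_def)
  have A0: "A $ 0 \<noteq> 0"
    using is_A_series_nth_0[OF A] f1 by simp
  have "(fps_X ^ 2 * inverse A) oo f = f * f * inverse (A oo f)"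
    by (simp add: fps_compose_mult_distrib[OF f0] fps_compose_power[OF f0] f0
        fps_inverse_compose[OF f0 A0] power2_eq_square)
  also have "\<dots> = fps_X * f * ((A oo f) * inverse (A oo f))"
    by (subst (1) fA) (simp add: mult_ac)
  also have "\<dots> = fps_X * f"
    using A0 by (simp add: inverse_mult_eq_1')
  finally show ?thesis .
qed

lemma is_typeI_B_seq_iff_A_series:
  fixes g f A :: "'a::field fps"
  assumes R: "riordan g f" and A: "is_A_series f A"
  shows "is_typeI_B_seq g f b \<longleftrightarrow> A = 1 + fps_X * (Abs_fps b oo (fps_X ^ 2 * inverse A))"
proof -
  define D where "D = fps_X ^ 2 * inverse A"
  define W where "W = Abs_fps b oo (fps_X * f)"
  from R have f0: "f $ 0 = 0" and f1: "f $ 1 \<noteq> 0"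
    by (auto simp: riordan_def)
  have "(Abs_fps b oo D) oo f = Abs_fps b oo (D oo f)"
    by (rule fps_compose_assoc[symmetric]) (simp_all add: f0 D_def fps_X_power_mult_nth)
  then have "(1 + fps_X * (Abs_fps b oo D)) oo f = 1 + f * W"
    unfolding W_def D_def is_A_series_X2_inverse_compose[OF A f0 f1]
    by (simp add: fps_compose_add_distrib fps_compose_mult_distrib[OF f0] f0)
  moreover have "is_typeI_B_seq g f b \<longleftrightarrow> fps_X * (A oo f) = fps_X * (1 + f * W)"
    using A unfolding is_typeI_B_seq_iff[OF R] W_def is_A_series_def by auto
  ultimately have "is_typeI_B_seq g f b \<longleftrightarrow> A oo f = (1 + fps_X * (Abs_fps b oo D)) oo f"
    by simp
  then show ?thesis
    unfolding D_def fps_compose_inj_right[OF f0 f1] .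
qed

lemma fps_X2_mult_power_eq: "(fps_X ^ 2 * H) ^ k = fps_X ^ (2 * k) * (H :: 'a::comm_ring_1 fps) ^ k"
  by (simp add: power_mult_distrib power_mult)

lemma fps_X2_mult_power_nth_less:
  fixes H :: "'a::comm_ring_1 fps"
  shows "n < 2 * k \<Longrightarrow> ((fps_X ^ 2 * H) ^ k) $ n = 0"
  by (simp add: fps_X2_mult_power_eq fps_X_power_mult_nth)

lemma fps_X2_mult_power_nth_double:
  fixes H :: "'a::comm_ring_1 fps"
  shows "((fps_X ^ 2 * H) ^ k) $ (2 * k) = (H $ 0) ^ k"
  by (simp add: fps_X2_mult_power_eq fps_X_power_mult_nth fps_nth_power_0)

lemma fps_compose_X2_mult_nth:
  fixes H :: "'a::comm_ring_1 fps"
  assumes "0 < n"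
  shows "(Abs_fps b oo (fps_X ^ 2 * H)) $ n = (\<Sum>k=1..n div 2. b k * ((fps_X ^ 2 * H) ^ k) $ n)"
proof -
  have "(Abs_fps b oo (fps_X ^ 2 * H)) $ n = (\<Sum>k=0..n. b k * ((fps_X ^ 2 * H) ^ k) $ n)"
    by (simp add: fps_compose_nth)
  also have "\<dots> = (\<Sum>k=1..n div 2. b k * ((fps_X ^ 2 * H) ^ k) $ n)"
    using assms by (intro sum.mono_neutral_right) (auto simp: fps_X2_mult_power_nth_less Suc_le_eq)
  finally show ?thesis .
qed

lemma fps_compose_X2_mult_nth_even:
  fixes H :: "'a::comm_ring_1 fps"
  assumes "H $ 0 = 1"
  shows "(Abs_fps b oo (fps_X ^ 2 * H)) $ (2 * l) = b l +
           (\<Sum>is\<in>compositions (2 * l) (int l - 1).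
              b (length is) * prod_list (map (($) (fps_X ^ 2 * H)) is))"
proof (cases l)
  case 0
  then show ?thesis
    by (simp add: sum_compositions_eq_sum_fps_power_nth)
next
  case (Suc p)
  have "(Abs_fps b oo (fps_X ^ 2 * H)) $ (2 * l)
          = (\<Sum>k=1..Suc p. b k * ((fps_X ^ 2 * H) ^ k) $ (2 * l))"
    using Suc fps_compose_X2_mult_nth[of "2 * l" b H] by simp
  also have "\<dots> = b l + (\<Sum>k=1..p. b k * ((fps_X ^ 2 * H) ^ k) $ (2 * l))"
    using Suc fps_X2_mult_power_nth_double[of H l] assms by simp
  finally show ?thesis
    using Suc by (simp add: sum_compositions_eq_sum_fps_power_nth fps_X_power_mult_nth)
qed

lemma fps_compose_X2_mult_nth_odd:
  fixes H :: "'a::comm_ring_1 fps"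
  shows "(Abs_fps b oo (fps_X ^ 2 * H)) $ (2 * l + 1) =
           (\<Sum>is\<in>compositions (2 * l + 1) (int l).
              b (length is) * prod_list (map (($) (fps_X ^ 2 * H)) is))"
  using fps_compose_X2_mult_nth[of "2 * l + 1" b H]
  by (simp add: sum_compositions_eq_sum_fps_power_nth fps_X_power_mult_nth)

lemma all_nat_iff_even_odd: "(\<forall>n::nat. P n) \<longleftrightarrow> (\<forall>l. P (2 * l)) \<and> (\<forall>l. P (2 * l + 1))"
  by (metis even_two_times_div_two odd_two_times_div_two_succ)

lemma all_Suc_iff_ge_2: "(\<forall>l. Q (Suc l)) \<longleftrightarrow> Q 1 \<and> (\<forall>l \<ge> 2. Q l)"
proof (intro iffI conjI allI impI)
  show "Q (Suc l)" if "Q 1 \<and> (\<forall>l \<ge> 2. Q l)" for l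
    using that by (cases l) auto
  show "Q l" if "\<forall>l. Q (Suc l)" and "2 \<le> l" for l
    using that by (cases l) auto
qed simp

lemma eq_1_plus_X_mult_compose_X2_inverse_iff:
  fixes A :: "'a::field fps" and b :: "nat \<Rightarrow> 'a"
  defines "D \<equiv> fps_X ^ 2 * inverse A"
  defines "F \<equiv> \<lambda>n m. \<Sum>is\<in>compositions n m. b (length is) * prod_list (map (($) D) is)"
  shows "A = 1 + fps_X * (Abs_fps b oo D) \<longleftrightarrow>
           A $ 0 = 1 \<and> A $ 2 = 0 \<and> (\<forall>l. b l = A $ (2*l+1) - F (2*l) (int l - 1)) \<and>
           (\<forall>l \<ge> 2. A $ (2*l) = F (2*l - 1) (int l - 1))"
proof -
  define E where "E = Abs_fps b oo D"
  have "A = 1 + fps_X * E \<longleftrightarrow> A - 1 = fps_X * E"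
    by (simp add: diff_eq_eq add.commute)
  also have "\<dots> \<longleftrightarrow> A $ 0 = 1 \<and> (\<forall>l. A $ (2*l+1) = E $ (2*l)) \<and> (\<forall>l. A $ (2*l+2) = E $ (2*l+1))"
    using all_nat_iff_even_odd[of "\<lambda>n. A $ Suc n = E $ n"] by (simp add: fps_eq_X_mult_iff)
  also have "\<dots> \<longleftrightarrow> A $ 0 = 1 \<and> (\<forall>l. b l = A $ (2*l+1) - F (2*l) (int l - 1)) \<and>
                     (\<forall>l. A $ (2*l+2) = F (2*l+1) (int l))"
  proof (cases "A $ 0 = 1")
    case True
    then have "inverse A $ 0 = 1"
      by simp
    then have "E $ (2*l) = b l + F (2*l) (int l - 1)" and "E $ (2*l+1) = F (2*l+1) (int l)" for l
      unfolding E_def D_def F_def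
      by (simp_all only: fps_compose_X2_mult_nth_even fps_compose_X2_mult_nth_odd)
    then show ?thesis
      by (auto simp: eq_diff_eq add.commute)
  qed simp
  also have "\<dots> \<longleftrightarrow> A $ 0 = 1 \<and> A $ 2 = 0 \<and> (\<forall>l. b l = A $ (2*l+1) - F (2*l) (int l - 1)) \<and>
                     (\<forall>l \<ge> 2. A $ (2*l) = F (2*l - 1) (int l - 1))"
  proof -
    have "F 1 0 = 0"
      by (simp add: F_def compositions_eq_UN_compositions_of_length)
    then show ?thesis
      using all_Suc_iff_ge_2[of "\<lambda>l. A $ (2*l) = F (2*l - 1) (int l - 1)"] by auto
  qed
  finally show ?thesis
    unfolding E_def .
qed

theorem theorem2p3:
  fixes g f A :: "'a::real_normed_field fps" and b :: "nat \<Rightarrow> 'a"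
  assumes "riordan g f"
    and "is_A_series f A"
  defines "c \<equiv> (\<lambda>j. fps_nth (inverse A) j)"
  defines "ct \<equiv> (\<lambda>j. if j < 2 then 0 else c (j - 2))"
  shows "is_typeI_B_seq g f b \<longleftrightarrow>
     fps_nth A 0 = 1 \<and> fps_nth A 2 = 0 \<and>
     (\<forall>l::nat. b l = fps_nth A (2*l+1)
        - (\<Sum>is\<in>compositions (2*l) (int l - 1). b (length is) * prod_list (map ct is))) \<and>
     (\<forall>l::nat. l \<ge> 2 \<longrightarrow> fps_nth A (2*l) =
        (\<Sum>is\<in>compositions (2*l - 1) (int l - 1). b (length is) * prod_list (map ct is)))"
proof -
  have "ct = ($) (fps_X ^ 2 * inverse A)"
    by (rule ext) (simp add: ct_def c_def fps_X_power_mult_nth)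
  then show ?thesis
    unfolding is_typeI_B_seq_iff_A_series[OF assms(1,2)] eq_1_plus_X_mult_compose_X2_inverse_iff
    by simp
qed

end
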